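(* Let $A$ be a nonempty finite set of $n$ alternatives and $\succ^w,\succ^o$ priority orderings on $A$. Each of the Walk-Open, Open-Walk, Rotating and Compromise choice rules (for $(\succ^w,\succ^o)$) satisfies capacity-filling, gross substitutes, and monotonicity. The Rotating choice rule satisfies the irrelevance of accepted alternatives and is (capacity-constrained) lexicographic, whereas the Walk-Open, Open-Walk and Compromise choice rules do not in general satisfy the irrelevance of accepted alternatives and are not in general (capacity-constrained) lexicographic (for each of them there exist $A$, $\succ^w$, $\succ^o$ for which it violates these).
   Context: Let $\mathcal{A}$ be the nonempty subsets of $A$. A choice rule assigns to each $(S,q)\in\mathcal{A}\times\{1,\dots,n\}$ a nonempty $C(S,q)\subseteq S$, $|C(S,q)|\le q$; $R(S,q)=S\setminus C(S,q)$. Given a list $(\succ_1,\dots,\succ_k)$ of priority orderings (strict linear orders on $A$), the lexicographic choice from $S$ chooses the $\succ_1$-highest element of $S$, then the $\succ_2$-highest among the remaining, etc., until $k$ are chosen or none is left. $C$ is (capacity-constrained) lexicographic if there is a profile $(\succ_1,\dots,\succ_n)$ such that $C(S,q)$ is the lexicographic choice from $S$ with $(\succ_1,\dots,\succ_q)$ for all $(S,q)$. The four rules are defined by taking, at capacity $q$, $C(S,q)$ to be the lexicographic choice from $S$ with the following list of length $q$ (w denotes $\succ^w$, o denotes $\succ^o$): Walk-Open: first $\lceil q/2\rceil$ entries w, remaining entries o. Open-Walk: first $\lceil q/2\rceil$ entries o, remaining entries w. Rotating: w, o, w, o, … (odd positions w, even positions o). Compromise: writing $q=4m+k$ with $k\in\{0,1,2,3\}$,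 the list consists of a block of w's, then a block of o's, then a block of w's, of lengths $(m,2m,m)$ if $k=0$, $(m+1,2m,m)$ if $k=1$, $(m+1,2m+1,m)$ if $k=2$, $(m+1,2m+1,m+1)$ if $k=3$. Capacity-filling: $|C(S,q)|=\min\{|S|,q\}$. Gross substitutes: for $a\neq b$ in $S$, $a\in C(S,q)\Rightarrow a\in C(S\setminus\{b\},q)$. Monotonicity: $C(S,q)\subseteq C(S,q+1)$ for $q\le n-1$. Irrelevance of accepted alternatives: for $S,S'\in\mathcal{A}$ and $q\le n-1$, $R(S,q)=R(S',q)$ implies $C(S,q+1)\cap R(S,q)=C(S',q+1)\cap R(S',q)$. *)

theory Defs
  imports Main
begin

text \<open>A priority ordering on A: a strict linear order on A (contained in A x A).
  Convention: (a, b) \<in> r means a has higher priority than b.\<close>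
definition priority_order :: "'a set \<Rightarrow> 'a rel \<Rightarrow> bool" where
  "priority_order A r \<longleftrightarrow> r \<subseteq> A \<times> A \<and> strict_linear_order_on A r"

definition top_elem :: "'a rel \<Rightarrow> 'a set \<Rightarrow> 'a" where
  "top_elem r S = (THE a. a \<in> S \<and> (\<forall>b\<in>S. b \<noteq> a \<longrightarrow> (a, b) \<in> r))"

fun lex_choice :: "'a rel list \<Rightarrow> 'a set \<Rightarrow> 'a set" where
  "lex_choice [] S = {}"
| "lex_choice (r # rs) S =
     (if S = {} then {} else insert (top_elem r S) (lex_choice rs (S - {top_elem r S})))"

definition walk_open_list :: "'a rel \<Rightarrow> 'a rel \<Rightarrow> nat \<Rightarrow> 'a rel list" where
  "walk_open_list w op q = replicate ((q + 1) div 2) w @ replicate (q - (q + 1) div 2) op"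

definition open_walk_list :: "'a rel \<Rightarrow> 'a rel \<Rightarrow> nat \<Rightarrow> 'a rel list" where
  "open_walk_list w op q = replicate ((q + 1) div 2) op @ replicate (q - (q + 1) div 2) w"

definition rotating_list :: "'a rel \<Rightarrow> 'a rel \<Rightarrow> nat \<Rightarrow> 'a rel list" where
  "rotating_list w op q = map (\<lambda>i. if even i then w else op) [0..<q]"

definition compromise_list :: "'a rel \<Rightarrow> 'a rel \<Rightarrow> nat \<Rightarrow> 'a rel list" where
  "compromise_list w op q =
     (let m = q div 4; k = q mod 4 in
        replicate (m + (if k \<ge> 1 then 1 else 0)) w
      @ replicate (2 * m + (if k \<ge> 2 then 1 else 0)) op
      @ replicate (m + (if k \<ge> 3 then 1 else 0)) w)"

definition walk_open :: "'a rel \<Rightarrow> 'a rel \<Rightarrow> 'a set \<Rightarrow> nat \<Rightarrow> 'a set" where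
  "walk_open w op S q = lex_choice (walk_open_list w op q) S"

definition open_walk :: "'a rel \<Rightarrow> 'a rel \<Rightarrow> 'a set \<Rightarrow> nat \<Rightarrow> 'a set" where
  "open_walk w op S q = lex_choice (open_walk_list w op q) S"

definition rotating :: "'a rel \<Rightarrow> 'a rel \<Rightarrow> 'a set \<Rightarrow> nat \<Rightarrow> 'a set" where
  "rotating w op S q = lex_choice (rotating_list w op q) S"

definition compromise :: "'a rel \<Rightarrow> 'a rel \<Rightarrow> 'a set \<Rightarrow> nat \<Rightarrow> 'a set" where
  "compromise w op S q = lex_choice (compromise_list w op q) S"

definition capacity_filling :: "'a set \<Rightarrow> ('a set \<Rightarrow> nat \<Rightarrow> 'a set) \<Rightarrow> bool" where
  "capacity_filling A C \<longleftrightarrow>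
     (\<forall>S q. S \<noteq> {} \<and> S \<subseteq> A \<and> 1 \<le> q \<and> q \<le> card A \<longrightarrow> card (C S q) = min (card S) q)"

definition gross_substitutes :: "'a set \<Rightarrow> ('a set \<Rightarrow> nat \<Rightarrow> 'a set) \<Rightarrow> bool" where
  "gross_substitutes A C \<longleftrightarrow>
     (\<forall>S q a b. S \<noteq> {} \<and> S \<subseteq> A \<and> 1 \<le> q \<and> q \<le> card A \<and> a \<in> S \<and> b \<in> S \<and> a \<noteq> b
        \<and> a \<in> C S q \<longrightarrow> a \<in> C (S - {b}) q)"

definition monotonicity :: "'a set \<Rightarrow> ('a set \<Rightarrow> nat \<Rightarrow> 'a set) \<Rightarrow> bool" where
  "monotonicity A C \<longleftrightarrow>
     (\<forall>S q. S \<noteq> {} \<and> S \<subseteq> A \<and> 1 \<le> q \<and> q \<le> card A - 1 \<longrightarrow> C S q \<subseteq> C S (q + 1))"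

definition rejected :: "('a set \<Rightarrow> nat \<Rightarrow> 'a set) \<Rightarrow> 'a set \<Rightarrow> nat \<Rightarrow> 'a set" where
  "rejected C S q = S - C S q"

definition irrelevance_accepted :: "'a set \<Rightarrow> ('a set \<Rightarrow> nat \<Rightarrow> 'a set) \<Rightarrow> bool" where
  "irrelevance_accepted A C \<longleftrightarrow>
     (\<forall>S S' q. S \<noteq> {} \<and> S \<subseteq> A \<and> S' \<noteq> {} \<and> S' \<subseteq> A \<and> 1 \<le> q \<and> q \<le> card A - 1
        \<and> rejected C S q = rejected C S' q
        \<longrightarrow> C S (q + 1) \<inter> rejected C S q = C S' (q + 1) \<inter> rejected C S' q)"

definition lexicographic :: "'a set \<Rightarrow> ('a set \<Rightarrow> nat \<Rightarrow> 'a set) \<Rightarrow> bool" where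
  "lexicographic A C \<longleftrightarrow>
     (\<exists>prof. length prof = card A \<and> (\<forall>r \<in> set prof. priority_order A r) \<and>
        (\<forall>S q. S \<noteq> {} \<and> S \<subseteq> A \<and> 1 \<le> q \<and> q \<le> card A \<longrightarrow> C S q = lex_choice (take q prof) S))"

end

theory Submission
  imports Defs "HOL-Library.Sublist"
begin

text \<open>Shrinking the menu can only shrink what a lexicographic choice leaves over after each
  pick. Hence a chosen alternative stays chosen when another one is removed, and passing to a
  list of orderings that contains the old one as a subsequence only adds chosen alternatives.
  Each of the four rules uses a list of length q at capacity q that is a subsequence of its list
  at capacity q+1, which gives capacity-filling, gross substitutes and monotonicity. The
  rotating lists are the prefixes of one profile, so that rule is lexicographic, and a
  lexicographic rule fills seat q+1 by a single fixed ordering applied to the alternatives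
  rejected at capacity q, which is irrelevance of accepted alternatives. The other three rules
  insert the new ordering in the middle of the list instead; with w = 0 > 1 > 2 > 3 > 4 > 5 and
  o = 0 > 1 > 2 > 5 > 4 > 3 this produces two menus with the same rejected alternatives at
  capacity q but different extra picks at capacity q+1.\<close>

lemma priority_order_has_top:
  assumes "priority_order A r" and "finite S" and "S \<subseteq> A" and "S \<noteq> {}"
  shows "\<exists>a\<in>S. \<forall>b\<in>S. b \<noteq> a \<longrightarrow> (a, b) \<in> r"
  using assms(2,4,3)
proof (induction S rule: finite_ne_induct)
  case (singleton x)
  then show ?case by auto
next
  case (insert x F)
  then obtain t where t: "t \<in> F" "\<forall>b\<in>F. b \<noteq> t \<longrightarrow> (t, b) \<in> r"
    by auto
  have "trans r" and "total_on A r"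
    using assms(1) by (auto simp: priority_order_def strict_linear_order_on_def)
  moreover have "x \<noteq> t" and "x \<in> A" and "t \<in> A"
    using t insert by auto
  ultimately consider "(x, t) \<in> r" | "(t, x) \<in> r"
    by (auto simp: total_on_def)
  then show ?case
  proof cases
    case 1
    with t \<open>trans r\<close> show ?thesis by (auto dest: transD)
  next
    case 2
    with t show ?thesis by auto
  qed
qed

lemma top_elem_eqI:
  assumes "priority_order A r" and "a \<in> S" and "\<forall>b\<in>S. b \<noteq> a \<longrightarrow> (a, b) \<in> r"
  shows "top_elem r S = a"
  unfolding top_elem_def
proof (rule the_equality)
  show "a \<in> S \<and> (\<forall>b\<in>S. b \<noteq> a \<longrightarrow> (a, b) \<in> r)"
    using assms by auto
next
  fix c
  assume c: "c \<in> S \<and> (\<forall>b\<in>S. b \<noteq> c \<longrightarrow> (c, b) \<in> r)"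
  have "trans r" and "irrefl r"
    using assms(1) by (auto simp: priority_order_def strict_linear_order_on_def)
  then show "c = a"
    using c assms(2,3) by (metis irrefl_def transD)
qed

lemma top_elem_greatest:
  assumes "priority_order A r" and "finite S" and "S \<subseteq> A" and "S \<noteq> {}"
  shows "top_elem r S \<in> S \<and> (\<forall>b\<in>S. b \<noteq> top_elem r S \<longrightarrow> (top_elem r S, b) \<in> r)"
  using priority_order_has_top[OF assms] top_elem_eqI[OF assms(1)] by metis

lemma top_elem_subset:
  assumes "priority_order A r" and "finite S" and "S \<subseteq> A" and "S \<noteq> {}"
    and "top_elem r S \<in> S'" and "S' \<subseteq> S"
  shows "top_elem r S' = top_elem r S"
  using top_elem_greatest[OF assms(1-4)] assms(5,6) by (intro top_elem_eqI[OF assms(1)]) auto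

subsection \<open>Lexicographic choice\<close>

lemma lex_choice_empty [simp]: "lex_choice rs {} = {}"
  by (cases rs) auto

lemma lex_choice_append:
  "lex_choice (xs @ ys) S = lex_choice xs S \<union> lex_choice ys (S - lex_choice xs S)"
proof (induction xs arbitrary: S)
  case Nil
  then show ?case by simp
next
  case (Cons r xs)
  have "S - insert (top_elem r S) (lex_choice xs (S - {top_elem r S}))
      = S - {top_elem r S} - lex_choice xs (S - {top_elem r S})"
    by auto
  with Cons.IH show ?case by simp
qed

lemma lex_choice_subset:
  assumes "\<forall>r\<in>set rs. priority_order A r" and "finite S" and "S \<subseteq> A"
  shows "lex_choice rs S \<subseteq> S"
  using assms
proof (induction rs arbitrary: S)
  case Nil
  then show ?case by simp
next
  case (Cons r rs)
  then have "S \<noteq> {} \<Longrightarrow> top_elem r S \<in> S"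
    using top_elem_greatest[of A r S] by simp
  moreover have "lex_choice rs (S - {top_elem r S}) \<subseteq> S - {top_elem r S}"
    using Cons by auto
  ultimately show ?case by auto
qed

lemma card_lex_choice:
  assumes "\<forall>r\<in>set rs. priority_order A r" and "finite S" and "S \<subseteq> A"
  shows "card (lex_choice rs S) = min (card S) (length rs)"
  using assms
proof (induction rs arbitrary: S)
  case Nil
  then show ?case by simp
next
  case (Cons r rs)
  show ?case
  proof (cases "S = {}")
    case True
    then show ?thesis by simp
  next
    case False
    define t where "t = top_elem r S"
    have "t \<in> S"
      using top_elem_greatest[of A r S] Cons.prems False by (simp add: t_def)
    have "lex_choice rs (S - {t}) \<subseteq> S - {t}"
      using lex_choice_subset[of rs A "S - {t}"] Cons.prems by auto
    then have "t \<notin> lex_choice rs (S - {t})" and "finite (lex_choice rs (S - {t}))"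
      using Cons.prems(2) finite_subset by auto
    then have "card (lex_choice (r # rs) S) = Suc (card (lex_choice rs (S - {t})))"
      using False by (simp add: t_def [symmetric])
    also have "\<dots> = Suc (min (card (S - {t})) (length rs))"
      using Cons.prems by (subst Cons.IH) auto
    also have "\<dots> = min (card S) (length (r # rs))"
      using card_Suc_Diff1[OF Cons.prems(2) \<open>t \<in> S\<close>] by simp
    finally show ?thesis .
  qed
qed

lemma Diff_lex_choice_mono:
  assumes "\<forall>r\<in>set rs. priority_order A r" and "finite S" and "S \<subseteq> A" and "S' \<subseteq> S"
  shows "S' - lex_choice rs S' \<subseteq> S - lex_choice rs S"
  using assms
proof (induction rs arbitrary: S S')
  case Nil
  then show ?case by simp
next
  case (Cons r rs)
  show ?case
  proof (cases "S' = {}")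
    case True
    then show ?thesis by simp
  next
    case False
    with Cons.prems have "S \<noteq> {}" by auto
    define t where "t = top_elem r S"
    define t' where "t' = top_elem r S'"
    have "t \<in> S' \<Longrightarrow> t' = t"
      using top_elem_subset[of A r S S'] Cons.prems \<open>S \<noteq> {}\<close> by (simp add: t_def t'_def)
    then have "S' - {t'} \<subseteq> S - {t}"
      using Cons.prems(4) by auto
    then have "S' - {t'} - lex_choice rs (S' - {t'}) \<subseteq> S - {t} - lex_choice rs (S - {t})"
      using Cons.IH[of "S - {t}" "S' - {t'}"] Cons.prems by auto
    with False \<open>S \<noteq> {}\<close> show ?thesis
      by (auto simp: t_def [symmetric] t'_def [symmetric])
  qed
qed

lemma lex_choice_Diff_singleton:
  assumes "\<forall>r\<in>set rs. priority_order A r" and "finite S" and "S \<subseteq> A"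
    and "a \<in> lex_choice rs S" and "a \<noteq> b"
  shows "a \<in> lex_choice rs (S - {b})"
  using Diff_lex_choice_mono[OF assms(1-3), of "S - {b}"] lex_choice_subset[OF assms(1-3)] assms(4,5)
  by auto

lemma set_mono_subseq: "subseq xs ys \<Longrightarrow> set xs \<subseteq> set ys"
  by (auto elim: list_emb_set)

lemma lex_choice_subseq_mono:
  assumes "subseq xs ys" and "\<forall>r\<in>set ys. priority_order A r" and "finite S" and "S \<subseteq> A"
  shows "lex_choice xs S \<subseteq> lex_choice ys S"
  using assms
proof (induction arbitrary: S rule: list_emb.induct)
  case (list_emb_Nil ys)
  then show ?case by simp
next
  case (list_emb_Cons xs ys y)
  show ?case
  proof (cases "S = {}")
    case True
    then show ?thesis by simp
  next
    case False
    define t where "t = top_elem y S"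
    have "\<forall>r\<in>set xs. priority_order A r"
      using set_mono_subseq[OF list_emb_Cons.hyps] list_emb_Cons.prems(1) by auto
    then have "lex_choice xs S \<subseteq> insert t (lex_choice xs (S - {t}))"
      using lex_choice_Diff_singleton[of xs A S] list_emb_Cons.prems(2,3) by blast
    also have "\<dots> \<subseteq> insert t (lex_choice ys (S - {t}))"
      using list_emb_Cons.IH[of "S - {t}"] list_emb_Cons.prems by auto
    finally show ?thesis
      using False by (simp add: t_def [symmetric])
  qed
next
  case (list_emb_Cons2 x y xs ys)
  define t where "t = top_elem y S"
  have "lex_choice xs (S - {t}) \<subseteq> lex_choice ys (S - {t})"
    using list_emb_Cons2.IH[of "S - {t}"] list_emb_Cons2.prems by auto
  then show ?case
    using \<open>x = y\<close> by (simp add: t_def [symmetric]) blast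
qed

lemma lex_choice_rule_properties:
  assumes "finite A"
    and C: "\<And>S q. C S q = lex_choice (L q) S"
    and priority: "\<And>q. \<forall>r\<in>set (L q). priority_order A r"
    and length_L: "\<And>q. length (L q) = q"
    and subseq_L: "\<And>q. subseq (L q) (L (Suc q))"
  shows "capacity_filling A C \<and> gross_substitutes A C \<and> monotonicity A C"
proof -
  have fin: "S \<subseteq> A \<Longrightarrow> finite S" for S
    using \<open>finite A\<close> finite_subset by blast
  have "capacity_filling A C"
    unfolding capacity_filling_def C
  proof (intro allI impI)
    fix S q
    assume "S \<noteq> {} \<and> S \<subseteq> A \<and> 1 \<le> q \<and> q \<le> card A"
    then show "card (lex_choice (L q) S) = min (card S) q"
      using card_lex_choice[OF priority fin] length_L by simp
  qed
  moreover have "gross_substitutes A C"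
    unfolding gross_substitutes_def C
  proof (intro allI impI)
    fix S q a b
    assume "S \<noteq> {} \<and> S \<subseteq> A \<and> 1 \<le> q \<and> q \<le> card A \<and> a \<in> S \<and> b \<in> S \<and> a \<noteq> b
      \<and> a \<in> lex_choice (L q) S"
    then show "a \<in> lex_choice (L q) (S - {b})"
      using lex_choice_Diff_singleton[OF priority fin] by blast
  qed
  moreover have "monotonicity A C"
    unfolding monotonicity_def C
  proof (intro allI impI)
    fix S q
    assume "S \<noteq> {} \<and> S \<subseteq> A \<and> 1 \<le> q \<and> q \<le> card A - 1"
    then show "lex_choice (L q) S \<subseteq> lex_choice (L (q + 1)) S"
      using lex_choice_subseq_mono[OF subseq_L priority fin] by simp
  qed
  ultimately show ?thesis by blast
qed

lemma subseq_replicate: "m \<le> n \<Longrightarrow> subseq (replicate m x) (replicate n x)"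
  by (metis le_add_diff_inverse2 replicate_add subseq_drop_many subseq_order.order_refl)

lemma walk_open_list_eq: "walk_open_list w op q = replicate ((q + 1) div 2) w @ replicate (q div 2) op"
proof -
  have "q - (q + 1) div 2 = q div 2"
    by presburger
  then show ?thesis
    by (simp add: walk_open_list_def)
qed

lemma open_walk_list_eq: "open_walk_list w op q = replicate ((q + 1) div 2) op @ replicate (q div 2) w"
proof -
  have "q - (q + 1) div 2 = q div 2"
    by presburger
  then show ?thesis
    by (simp add: open_walk_list_def)
qed

lemma compromise_list_eq:
  "compromise_list w op q =
     replicate ((q + 3) div 4) w @ replicate (q div 2) op @ replicate ((q + 1) div 4) w"
proof -
  have "q div 4 + (if 1 \<le> q mod 4 then 1 else 0) = (q + 3) div 4"
    and "2 * (q div 4) + (if 2 \<le> q mod 4 then 1 else 0) = q div 2"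
    and "q div 4 + (if 3 \<le> q mod 4 then 1 else 0) = (q + 1) div 4"
    by presburger+
  then show ?thesis
    unfolding compromise_list_def Let_def by presburger
qed

lemma take_rotating_list: "q \<le> n \<Longrightarrow> take q (rotating_list w op n) = rotating_list w op q"
  by (simp add: rotating_list_def take_map)

lemma length_choice_lists:
  "length (walk_open_list w op q) = q" "length (open_walk_list w op q) = q"
  "length (rotating_list w op q) = q" "length (compromise_list w op q) = q"
proof -
  have "(q + 1) div 2 + q div 2 = q"
    by presburger
  then show "length (walk_open_list w op q) = q" "length (open_walk_list w op q) = q"
    by (simp_all add: walk_open_list_eq open_walk_list_eq)
  show "length (rotating_list w op q) = q"
    by (simp add: rotating_list_def)
  have "q div 4 + (if 1 \<le> q mod 4 then 1 else 0) + (2 * (q div 4) + (if 2 \<le> q mod 4 then 1 else 0))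
      + (q div 4 + (if 3 \<le> q mod 4 then 1 else 0)) = q"
    by presburger
  then show "length (compromise_list w op q) = q"
    by (simp add: compromise_list_def Let_def)
qed

lemma set_choice_lists:
  "set (walk_open_list w op q) \<subseteq> {w, op}" "set (open_walk_list w op q) \<subseteq> {w, op}"
  "set (rotating_list w op q) \<subseteq> {w, op}" "set (compromise_list w op q) \<subseteq> {w, op}"
  unfolding walk_open_list_eq open_walk_list_eq compromise_list_eq
  by (auto simp: rotating_list_def)

lemma subseq_choice_lists:
  "subseq (walk_open_list w op q) (walk_open_list w op (Suc q))"
  "subseq (open_walk_list w op q) (open_walk_list w op (Suc q))"
  "subseq (compromise_list w op q) (compromise_list w op (Suc q))"
  "subseq (rotating_list w op q) (rotating_list w op (Suc q))"
proof -
  show "subseq (walk_open_list w op q) (walk_open_list w op (Suc q))"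
    unfolding walk_open_list_eq by (intro list_emb_append_mono subseq_replicate div_le_mono) simp_all
  show "subseq (open_walk_list w op q) (open_walk_list w op (Suc q))"
    unfolding open_walk_list_eq by (intro list_emb_append_mono subseq_replicate div_le_mono) simp_all
  show "subseq (compromise_list w op q) (compromise_list w op (Suc q))"
    unfolding compromise_list_eq by (intro list_emb_append_mono subseq_replicate div_le_mono) simp_all
  show "subseq (rotating_list w op q) (rotating_list w op (Suc q))"
    by (intro prefix_imp_subseq) (simp add: rotating_list_def)
qed

lemma lexicographic_imp_irrelevance_accepted:
  assumes "lexicographic A C"
  shows "irrelevance_accepted A C"
proof -
  obtain prof where "length prof = card A"
    and C: "\<forall>S q. S \<noteq> {} \<and> S \<subseteq> A \<and> 1 \<le> q \<and> q \<le> card A \<longrightarrow>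
              C S q = lex_choice (take q prof) S"
    using assms unfolding lexicographic_def by blast
  have extra_seat: "C T (q + 1) \<inter> rejected C T q = lex_choice [prof ! q] (rejected C T q) \<inter> rejected C T q"
    if "T \<noteq> {}" "T \<subseteq> A" "1 \<le> q" "q \<le> card A - 1" for T q
  proof -
    have "q < length prof"
      using that \<open>length prof = card A\<close> by arith
    then have "take (q + 1) prof = take q prof @ [prof ! q]"
      by (simp add: take_Suc_conv_app_nth)
    moreover have "C T q = lex_choice (take q prof) T"
      using C that \<open>q < length prof\<close> \<open>length prof = card A\<close> by auto
    moreover have "C T (q + 1) = lex_choice (take (q + 1) prof) T"
      using C that \<open>q < length prof\<close> \<open>length prof = card A\<close> by auto
    ultimately have "C T (q + 1) = C T q \<union> lex_choice [prof ! q] (rejected C T q)"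
      by (simp only: lex_choice_append rejected_def)
    then show ?thesis
      unfolding rejected_def by auto
  qed
  show ?thesis
    unfolding irrelevance_accepted_def
  proof (intro allI impI)
    fix S S' q
    assume "S \<noteq> {} \<and> S \<subseteq> A \<and> S' \<noteq> {} \<and> S' \<subseteq> A \<and> 1 \<le> q \<and> q \<le> card A - 1
      \<and> rejected C S q = rejected C S' q"
    then show "C S (q + 1) \<inter> rejected C S q = C S' (q + 1) \<inter> rejected C S' q"
      using extra_seat[of S q] extra_seat[of S' q] by simp
  qed
qed

lemma lexicographic_rotating:
  assumes "priority_order A w" and "priority_order A op"
  shows "lexicographic A (rotating w op)"
  unfolding lexicographic_def
proof (intro exI conjI)
  show "length (rotating_list w op (card A)) = card A"
    by (fact length_choice_lists)
  show "\<forall>r\<in>set (rotating_list w op (card A)). priority_order A r"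
    using set_choice_lists(3) assms by blast
  show "\<forall>S q. S \<noteq> {} \<and> S \<subseteq> A \<and> 1 \<le> q \<and> q \<le> card A \<longrightarrow>
          rotating w op S q = lex_choice (take q (rotating_list w op (card A))) S"
    by (simp add: rotating_def take_rotating_list)
qed

subsection \<open>Counterexamples\<close>

definition rank_order :: "'a list \<Rightarrow> 'a rel" where
  "rank_order xs = {(xs ! i, xs ! j) | i j. i < j \<and> j < length xs}"

lemma priority_order_rank_order:
  assumes "distinct xs"
  shows "priority_order (set xs) (rank_order xs)"
proof -
  have "trans (rank_order xs)"
  proof (rule transI)
    fix x y z
    assume "(x, y) \<in> rank_order xs" and "(y, z) \<in> rank_order xs"
    then obtain i j j' k where "x = xs ! i" "y = xs ! j" "i < j" "j < length xs"
        "y = xs ! j'" "z = xs ! k" "j' < k" "k < length xs"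
      by (auto simp: rank_order_def)
    moreover from this have "j = j'"
      using assms nth_eq_iff_index_eq by fastforce
    ultimately show "(x, z) \<in> rank_order xs"
      unfolding rank_order_def by (blast intro: less_trans)
  qed
  moreover have "irrefl (rank_order xs)"
    unfolding irrefl_def rank_order_def using assms nth_eq_iff_index_eq by fastforce
  moreover have "total_on (set xs) (rank_order xs)"
  proof (rule total_onI)
    fix x y
    assume "x \<in> set xs" "y \<in> set xs" "x \<noteq> y"
    then obtain i j where "i < length xs" "j < length xs" "x = xs ! i" "y = xs ! j" "i \<noteq> j"
      by (metis in_set_conv_nth)
    then show "(x, y) \<in> rank_order xs \<or> (y, x) \<in> rank_order xs"
      unfolding rank_order_def by (metis (mono_tags, lifting) mem_Collect_eq nat_neq_iff)
  qed
  moreover have "rank_order xs \<subseteq> set xs \<times> set xs"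
    by (auto simp: rank_order_def)
  ultimately show ?thesis
    by (simp add: priority_order_def strict_linear_order_on_def)
qed

lemma top_elem_rank_order:
  assumes "distinct xs" and "S \<subseteq> set xs" and "S \<noteq> {}"
  shows "top_elem (rank_order xs) S = hd (filter (\<lambda>x. x \<in> S) xs)"
proof -
  obtain a zs where "filter (\<lambda>x. x \<in> S) xs = a # zs"
    using assms(2,3) by (cases "filter (\<lambda>x. x \<in> S) xs") (auto simp: filter_empty_conv)
  then obtain us vs where xs: "xs = us @ a # vs" and "\<forall>u\<in>set us. u \<notin> S" and "a \<in> S"
    by (auto simp: filter_eq_Cons_iff)
  have "(a, b) \<in> rank_order xs" if "b \<in> S" "b \<noteq> a" for b
  proof -
    have "b \<in> set vs"
      using that xs \<open>\<forall>u\<in>set us. u \<notin> S\<close> assms(2) by auto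
    then obtain k where "k < length vs" "b = vs ! k"
      by (metis in_set_conv_nth)
    then have "a = xs ! length us" "b = xs ! (length us + 1 + k)" "length us + 1 + k < length xs"
      using xs by (simp_all add: nth_append)
    then show ?thesis
      unfolding rank_order_def by force
  qed
  then show ?thesis
    using top_elem_eqI[OF priority_order_rank_order[OF assms(1)] \<open>a \<in> S\<close>]
      \<open>filter (\<lambda>x. x \<in> S) xs = a # zs\<close> by simp
qed

lemma not_irrelevance_acceptedI:
  assumes "S \<noteq> {}" "S \<subseteq> A" "S' \<noteq> {}" "S' \<subseteq> A" "1 \<le> q" "q < card A"
    and "rejected C S q = rejected C S' q"
    and "C S (q + 1) \<inter> rejected C S q \<noteq> C S' (q + 1) \<inter> rejected C S' q"
  shows "\<not> irrelevance_accepted A C"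
proof
  assume "irrelevance_accepted A C"
  moreover have "q \<le> card A - 1"
    using assms(6) by linarith
  ultimately show False
    using assms unfolding irrelevance_accepted_def by blast
qed

lemma small_choice_lists:
  "walk_open_list w op 2 = [w, op]" "walk_open_list w op 3 = [w, w, op]"
  "open_walk_list w op 2 = [op, w]" "open_walk_list w op 3 = [op, op, w]"
  "compromise_list w op 3 = [w, op, w]" "compromise_list w op 4 = [w, op, op, w]"
  by (simp_all add: walk_open_list_eq open_walk_list_eq compromise_list_eq)
    (simp_all add: eval_nat_numeral)

lemma priority_order_example:
  "priority_order {0, 1, 2, 3, 4, 5} (rank_order [0, 1, 2, 3, 4, 5 :: nat])"
  "priority_order {0, 1, 2, 3, 4, 5} (rank_order [0, 1, 2, 5, 4, 3 :: nat])"
  using priority_order_rank_order[of "[0, 1, 2, 3, 4, 5 :: nat]"]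
    priority_order_rank_order[of "[0, 1, 2, 5, 4, 3 :: nat]"]
  by (simp_all add: insert_commute)

lemma walk_open_not_irrelevance_accepted:
  "\<not> irrelevance_accepted {0, 1, 2, 3, 4, 5}
     (walk_open (rank_order [0, 1, 2, 3, 4, 5 :: nat]) (rank_order [0, 1, 2, 5, 4, 3]))"
  by (rule not_irrelevance_acceptedI[of "{0, 3, 4, 5}" _ "{0, 1, 3, 4}" 2])
    (simp_all add: walk_open_def small_choice_lists rejected_def top_elem_rank_order insert_Diff_if)

lemma open_walk_not_irrelevance_accepted:
  "\<not> irrelevance_accepted {0, 1, 2, 3, 4, 5}
     (open_walk (rank_order [0, 1, 2, 3, 4, 5 :: nat]) (rank_order [0, 1, 2, 5, 4, 3]))"
  by (rule not_irrelevance_acceptedI[of "{0, 3, 4, 5}" _ "{0, 1, 4, 5}" 2])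
    (simp_all add: open_walk_def small_choice_lists rejected_def top_elem_rank_order insert_Diff_if)

lemma compromise_not_irrelevance_accepted:
  "\<not> irrelevance_accepted {0, 1, 2, 3, 4, 5}
     (compromise (rank_order [0, 1, 2, 3, 4, 5 :: nat]) (rank_order [0, 1, 2, 5, 4, 3]))"
  by (rule not_irrelevance_acceptedI[of "{0, 1, 3, 4, 5}" _ "{0, 1, 2, 4, 5}" 3])
    (simp_all add: compromise_def small_choice_lists rejected_def top_elem_rank_order insert_Diff_if)

theorem proposition6:
  shows "(\<forall>(A :: 'a set) w op. finite A \<and> A \<noteq> {} \<and> priority_order A w \<and> priority_order A op \<longrightarrow>
            (\<forall>C \<in> {walk_open w op, open_walk w op, rotating w op, compromise w op}.
               capacity_filling A C \<and> gross_substitutes A C \<and> monotonicity A C)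
          \<and> irrelevance_accepted A (rotating w op) \<and> lexicographic A (rotating w op))
       \<and> (\<forall>rule \<in> {walk_open, open_walk, compromise}.
            \<exists>(A :: nat set) w op. finite A \<and> A \<noteq> {} \<and> priority_order A w \<and> priority_order A op
              \<and> \<not> irrelevance_accepted A (rule w op) \<and> \<not> lexicographic A (rule w op))"
proof (intro conjI allI impI)
  fix A :: "'a set" and w op
  assume "finite A \<and> A \<noteq> {} \<and> priority_order A w \<and> priority_order A op"
  then have orders: "finite A" "priority_order A w" "priority_order A op"
    by auto
  have priority: "\<forall>r\<in>set L. priority_order A r" if "set L \<subseteq> {w, op}" for L
    using that orders by auto
  note properties = lex_choice_rule_properties[OF \<open>finite A\<close>]
  show "\<forall>C \<in> {walk_open w op, open_walk w op, rotating w op, compromise w op}.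
          capacity_filling A C \<and> gross_substitutes A C \<and> monotonicity A C"
    using properties[OF _ priority[OF set_choice_lists(1)] length_choice_lists(1) subseq_choice_lists(1)]
      properties[OF _ priority[OF set_choice_lists(2)] length_choice_lists(2) subseq_choice_lists(2)]
      properties[OF _ priority[OF set_choice_lists(3)] length_choice_lists(3) subseq_choice_lists(4)]
      properties[OF _ priority[OF set_choice_lists(4)] length_choice_lists(4) subseq_choice_lists(3)]
    by (simp add: walk_open_def open_walk_def rotating_def compromise_def)
  show "lexicographic A (rotating w op)"
    using lexicographic_rotating orders by blast
  then show "irrelevance_accepted A (rotating w op)"
    by (rule lexicographic_imp_irrelevance_accepted)
next
  have witness: "\<exists>(A :: nat set) w op. finite A \<and> A \<noteq> {} \<and> priority_order A w
      \<and> priority_order A op \<and> \<not> irrelevance_accepted A (rule w op) \<and> \<not> lexicographic A (rule w op)"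
    if "\<not> irrelevance_accepted {0, 1, 2, 3, 4, 5}
          (rule (rank_order [0, 1, 2, 3, 4, 5]) (rank_order [0, 1, 2, 5, 4, 3]))" for rule
    using that priority_order_example lexicographic_imp_irrelevance_accepted
    by (intro exI[of _ "{0, 1, 2, 3, 4, 5}"]) auto
  show "\<forall>rule \<in> {walk_open, open_walk, compromise}.
          \<exists>(A :: nat set) w op. finite A \<and> A \<noteq> {} \<and> priority_order A w \<and> priority_order A op
            \<and> \<not> irrelevance_accepted A (rule w op) \<and> \<not> lexicographic A (rule w op)"
    using witness[of walk_open, OF walk_open_not_irrelevance_accepted]
      witness[of open_walk, OF open_walk_not_irrelevance_accepted]
      witness[of compromise, OF compromise_not_irrelevance_accepted]
    by blast
qed

end
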